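(* Let $L\in\mathbb{R}^{k\times k}$ be any task loss matrix with nonnegative entries, let $\Phi_{quad}(f,y)=\frac{1}{2k}\|f+L(:,y)\|_2^2$ be its quadratic surrogate, and let $\mathcal{F}\subseteq\mathbb{R}^k$ be a subspace containing the column space of $L$. Then for all $\varepsilon\ge0$, $$H_{\Phi_{quad},L,\mathcal{F}}(\varepsilon)\ \ge\ \frac{\varepsilon^2}{2k\max_{i\ne j}\|P_{\mathcal{F}}\Delta_{ij}\|_2^2}\ \ge\ \frac{\varepsilon^2}{4k},$$ where $P_{\mathcal{F}}$ is the orthogonal projection onto $\mathcal{F}$, $\Delta_{ij}=e_i-e_j$, and $e_c$ is the $c$-th standard basis vector of $\mathbb{R}^k$.
   Context: Labels are $\{1,\dots,k\}$; $L(:,y)$ denotes the $y$-th column of $L$. $\mathrm{pred}(f)$ is the smallest index maximizing $f_c$. For $q\in\Delta_k$ (probability simplex): $\ell(f,q)=\sum_c q_cL(\mathrm{pred}(f),c)$, $\phi(f,q)=\sum_c q_c\Phi(f,c)$, $\delta\ell(f,q)=\ell(f,q)-\inf_{\hat f\in\mathcal{F}}\ell(\hat f,q)$, $\delta\phi(f,q)=\phi(f,q)-\inf_{\hat f\in\mathcal{F}}\phi(\hat f,q)$. Calibration function: $H_{\Phi,L,\mathcal{F}}(\varepsilon)=\inf\{\delta\phi(f,q):f\in\mathcal{F},q\in\Delta_k,\delta\ell(f,q)\ge\varepsilon\}$, $+\infty$ if the feasible set is empty. Convention $1/0=+\infty$. *)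

theory Defs
  imports "HOL-Analysis.Analysis"
begin

text \<open>Labels are the elements of a finite linearly ordered type 'n (k = CARD('n)).
  Score vectors are elements of real^'n; the loss matrix is L :: real^'n^'n with
  L$i$j = L(i,j), so column y L = L(:,y).\<close>

definition pred :: "real^('n::{finite,linorder}) \<Rightarrow> ('n::{finite,linorder})" where
  "pred f = (LEAST c. \<forall>d. f$d \<le> f$c)"

definition prob_simplex :: "(real^'n) set" where
  "prob_simplex = {q. (\<forall>c. 0 \<le> q$c) \<and> sum (\<lambda>c. q$c) UNIV = 1}"

definition task_risk :: "real^('n::{finite,linorder})^('n::{finite,linorder}) \<Rightarrow> real^('n::{finite,linorder}) \<Rightarrow> real^('n::{finite,linorder}) \<Rightarrow> real" where
  "task_risk L f q = (\<Sum>c\<in>UNIV. q$c * L$(pred f)$c)"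

definition surr_risk :: "(real^'n \<Rightarrow> 'n \<Rightarrow> real) \<Rightarrow> real^'n \<Rightarrow> real^'n \<Rightarrow> real" where
  "surr_risk Phi f q = (\<Sum>c\<in>UNIV. q$c * Phi f c)"

definition excess_task :: "real^('n::{finite,linorder})^('n::{finite,linorder}) \<Rightarrow> (real^('n::{finite,linorder})) set \<Rightarrow> real^('n::{finite,linorder}) \<Rightarrow> real^('n::{finite,linorder}) \<Rightarrow> real" where
  "excess_task L F f q = task_risk L f q - (INF g\<in>F. task_risk L g q)"

definition excess_surr :: "(real^'n \<Rightarrow> 'n \<Rightarrow> real) \<Rightarrow> (real^'n) set \<Rightarrow> real^'n \<Rightarrow> real^'n \<Rightarrow> real" where
  "excess_surr Phi F f q = surr_risk Phi f q - (INF g\<in>F. surr_risk Phi g q)"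

text \<open>Calibration function, valued in extended reals; Inf of the empty set is +\<infinity>.\<close>
definition calib :: "(real^('n::{finite,linorder}) \<Rightarrow> ('n::{finite,linorder}) \<Rightarrow> real) \<Rightarrow> real^('n::{finite,linorder})^('n::{finite,linorder}) \<Rightarrow> (real^('n::{finite,linorder})) set \<Rightarrow> real \<Rightarrow> ereal" where
  "calib Phi L F \<epsilon> = Inf {ereal (excess_surr Phi F f q) | f q.
      f \<in> F \<and> q \<in> prob_simplex \<and> excess_task L F f q \<ge> \<epsilon>}"

definition phi_quad :: "real^'n^'n \<Rightarrow> real^'n \<Rightarrow> 'n \<Rightarrow> real" where
  "phi_quad L f y = (1 / (2 * real CARD('n))) * (norm (f + column y L))\<^sup>2"

definition orth_proj :: "(real^'n) set \<Rightarrow> real^'n \<Rightarrow> real^'n" where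
  "orth_proj F v = (THE p. p \<in> F \<and> (\<forall>w\<in>F. (v - p) \<bullet> w = 0))"

end

theory Submission
  imports Defs
begin

text \<open>Write \<open>v = L *v q\<close> for the vector of expected losses; it lies in \<open>F\<close>. The quadratic
  surrogate risk equals \<open>\<parallel>f + v\<parallel>\<^sup>2 / (2k)\<close> up to a constant, so \<open>-v\<close> minimises it and
  \<open>\<delta>\<phi>(f,q) \<ge> \<parallel>f + v\<parallel>\<^sup>2 / (2k)\<close>; \<open>-v\<close> also minimises the task risk. With \<open>i = pred f\<close> and
  \<open>j = pred (-v)\<close>, the excess task risk is at most \<open>v\<^sub>i - v\<^sub>j \<le> (f + v)\<^sub>i - (f + v)\<^sub>j
  = \<langle>P\<^sub>F \<Delta>\<^sub>i\<^sub>j, f + v\<rangle> \<le> \<parallel>P\<^sub>F \<Delta>\<^sub>i\<^sub>j\<parallel> \<parallel>f + v\<parallel>\<close>, since \<open>f + v \<in> F\<close> and \<open>f\<^sub>j \<le> f\<^sub>i\<close>. Squaring gives the first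
  bound; the second follows from \<open>\<parallel>P\<^sub>F \<Delta>\<^sub>i\<^sub>j\<parallel>\<^sup>2 \<le> \<parallel>\<Delta>\<^sub>i\<^sub>j\<parallel>\<^sup>2 = 2\<close>.\<close>

lemma orth_proj_in_subspace_orthogonal:
  fixes F :: "(real^'n) set"
  assumes F: "subspace F"
  shows "orth_proj F v \<in> F \<and> (\<forall>w\<in>F. (v - orth_proj F v) \<bullet> w = 0)"
proof -
  let ?P = "\<lambda>p. p \<in> F \<and> (\<forall>w\<in>F. (v - p) \<bullet> w = 0)"
  obtain y z where "y \<in> span F" "\<And>w. w \<in> span F \<Longrightarrow> orthogonal z w" "v = y + z"
    using orthogonal_subspace_decomp_exists[of F v] by metis
  moreover have "span F = F" using F by simp
  ultimately have ex: "?P y" by (auto simp: orthogonal_def)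
  have unique: "p = p'" if "?P p" "?P p'" for p p'
proof -
    have "p - p' \<in> F" using that F by (simp add: subspace_diff)
    with that have "(v - p') \<bullet> (p - p') - (v - p) \<bullet> (p - p') = 0" by simp
    then have "(p - p') \<bullet> (p - p') = 0" by (simp add: inner_diff_left)
    then show ?thesis by simp
  qed
  show ?thesis unfolding orth_proj_def
    by (rule theI[of ?P, OF ex]) (use unique ex in blast)
qed

lemma inner_orth_proj:
  assumes "subspace F" "w \<in> F"
  shows "orth_proj F v \<bullet> w = v \<bullet> w"
  using orth_proj_in_subspace_orthogonal[OF assms(1), of v] assms(2)
  by (simp add: inner_diff_left)

lemma norm_orth_proj_le:
  assumes "subspace F"
  shows "norm (orth_proj F v) \<le> norm v"
proof -
  let ?p = "orth_proj F v"
  have "norm ?p * norm ?p = v \<bullet> ?p"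
    using inner_orth_proj[OF assms orth_proj_in_subspace_orthogonal[OF assms, THEN conjunct1]]
    by (simp flip: power2_eq_square add: power2_norm_eq_inner)
  also have "\<dots> \<le> norm v * norm ?p" by (rule norm_cauchy_schwarz)
  finally show ?thesis by (cases "norm ?p = 0") auto
qed

lemma norm_axis_diff_squared:
  "i \<noteq> j \<Longrightarrow> (norm (axis i (1::real) - axis j 1))\<^sup>2 = 2"
  by (simp add: power2_norm_eq_inner inner_diff_left inner_diff_right inner_axis_axis)

lemma component_diff_le_norm_orth_proj:
  assumes "subspace F" "h \<in> F"
  shows "h$i - h$j \<le> norm (orth_proj F (axis i 1 - axis j 1)) * norm h"
proof -
  have "h$i - h$j = orth_proj F (axis i 1 - axis j 1) \<bullet> h"
    using inner_orth_proj[OF assms] by (simp add: inner_diff_left inner_axis')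
  also have "\<dots> \<le> norm (orth_proj F (axis i 1 - axis j 1)) * norm h"
    by (rule norm_cauchy_schwarz)
  finally show ?thesis .
qed

lemma norm_orth_proj_axis_diff_Max_bounds:
  fixes F :: "(real^'n) set"
  assumes "subspace F" "CARD('n) \<ge> 2"
  defines "M \<equiv> Max {(norm (orth_proj F (axis i 1 - axis j 1)))\<^sup>2 | i j. i \<noteq> j}"
  shows "\<And>i j. i \<noteq> j \<Longrightarrow> (norm (orth_proj F (axis i 1 - axis j 1)))\<^sup>2 \<le> M"
    and "0 \<le> M" and "M \<le> 2"
proof -
  let ?d = "\<lambda>i j. (norm (orth_proj F (axis i 1 - axis j 1)))\<^sup>2"
  let ?S = "{?d i j | i j. i \<noteq> (j::'n)}"
  have finite: "finite ?S"
    by (rule finite_subset[of _ "(\<lambda>(i, j). ?d i j) ` UNIV"]) auto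
  show le_M: "?d i j \<le> M" if "i \<noteq> j" for i j
    unfolding M_def using that by (intro Max_ge[OF finite]) blast
  obtain i j :: 'n where "i \<noteq> j"
    using assms(2) card_le_Suc0_iff_eq[of "UNIV :: 'n set"] by fastforce
  then show "0 \<le> M" using le_M[of i j] zero_le_power2 order_trans by blast
  have "?d i j \<le> 2" if "i \<noteq> j" for i j
    using power_mono[OF norm_orth_proj_le[OF assms(1)] norm_ge_zero, of "axis i 1 - axis j 1" 2]
      norm_axis_diff_squared[OF that] by simp
  moreover have "?S \<noteq> {}" using \<open>i \<noteq> j\<close> by blast
  ultimately show "M \<le> 2" unfolding M_def by (auto simp: Max_le_iff[OF finite])
qed

lemma pred_is_argmax: "f$d \<le> f$(pred f)"
proof -
  let ?argmax = "{c. \<forall>d. f$d \<le> f$c}"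
  have "?argmax \<noteq> {}"
    using Max_ge[of "range (\<lambda>d. f$d)"] Max_in[of "range (\<lambda>d. f$d)"] by fastforce
  then have "pred f = Min ?argmax"
    unfolding pred_def by (auto intro!: Least_Min)
  moreover have "Min ?argmax \<in> ?argmax"
    using \<open>?argmax \<noteq> {}\<close> by (intro Min_in) auto
  ultimately show ?thesis by simp
qed

lemma matrix_vector_mult_eq_sum_columns:
  fixes L :: "real^'n^'m"
  shows "L *v q = (\<Sum>c\<in>UNIV. q$c *\<^sub>R column c L)"
  by (simp add: vec_eq_iff column_def matrix_vector_mult_def mult.commute)

lemma neg_expected_loss_in_subspace:
  fixes L :: "real^'n^'m"
  assumes "subspace F" "span (columns L) \<subseteq> F"
  shows "- (L *v q) \<in> F"
  using assms matrix_vector_mult_in_columnspace[of L q] by (auto intro: subspace_neg)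

lemma task_risk_eq_component: "task_risk L g q = (L *v q) $ pred g"
  unfolding task_risk_def by (simp add: matrix_vector_mult_def mult.commute)

text \<open>A bias--variance decomposition: only the first term depends on \<open>f\<close>, and it
  vanishes at \<open>f = - L *v q\<close>, the point minimising both the surrogate and the task risk.\<close>

lemma surr_risk_phi_quad:
  fixes L :: "real^'n^'n"
  assumes "(\<Sum>c\<in>UNIV. q$c) = 1"
  shows "surr_risk (phi_quad L) f q =
    ((norm (f + L *v q))\<^sup>2 + (\<Sum>c\<in>UNIV. q$c * (norm (column c L))\<^sup>2) - (norm (L *v q))\<^sup>2)
      / (2 * real CARD('n))"
proof -
  let ?a = "\<lambda>c. column c L"
  have "f \<bullet> (L *v q) = (\<Sum>c\<in>UNIV. q$c * (f \<bullet> ?a c))"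
    by (simp add: matrix_vector_mult_eq_sum_columns inner_sum_right)
  moreover have "q$c * (norm (f + ?a c))\<^sup>2
      = q$c * (norm f)\<^sup>2 + 2 * (q$c * (f \<bullet> ?a c)) + q$c * (norm (?a c))\<^sup>2" for c
    by (simp add: power2_norm_eq_inner inner_commute algebra_simps)
  ultimately have "(\<Sum>c\<in>UNIV. q$c * (norm (f + ?a c))\<^sup>2)
      = (norm f)\<^sup>2 + 2 * (f \<bullet> (L *v q)) + (\<Sum>c\<in>UNIV. q$c * (norm (?a c))\<^sup>2)"
    using assms by (simp add: sum.distrib sum_distrib_left flip: sum_distrib_right)
  also have "\<dots> = (norm (f + L *v q))\<^sup>2 + (\<Sum>c\<in>UNIV. q$c * (norm (?a c))\<^sup>2) - (norm (L *v q))\<^sup>2"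
    by (simp add: power2_norm_eq_inner inner_add_left inner_add_right inner_commute)
  finally show ?thesis
    unfolding surr_risk_def phi_quad_def by (simp add: sum_distrib_left field_simps)
qed

lemma excess_task_le_risk_diff:
  assumes "h \<in> F" "\<And>g. g \<in> F \<Longrightarrow> task_risk L h q \<le> task_risk L g q"
  shows "excess_task L F f q \<le> task_risk L f q - task_risk L h q"
proof -
  have "task_risk L h q \<le> (INF g\<in>F. task_risk L g q)"
    using assms by (intro cINF_greatest) auto
  then show ?thesis unfolding excess_task_def by simp
qed

lemma risk_diff_le_excess_surr:
  assumes "h \<in> F" "bdd_below ((\<lambda>g. surr_risk Phi g q) ` F)"
  shows "surr_risk Phi f q - surr_risk Phi h q \<le> excess_surr Phi F f q"
proof -
  have "(INF g\<in>F. surr_risk Phi g q) \<le> surr_risk Phi h q"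
    using assms by (intro cINF_lower)
  then show ?thesis unfolding excess_surr_def by simp
qed

lemma excess_task_le_expected_loss_gap:
  assumes "- (L *v q) \<in> F"
  shows "excess_task L F f q \<le> (L *v q) $ pred f - (L *v q) $ pred (- (L *v q))"
  using excess_task_le_risk_diff[OF assms, of L q f] pred_is_argmax[of "- (L *v q)"]
  by (simp add: task_risk_eq_component)

lemma excess_surr_phi_quad_ge:
  fixes L :: "real^'n^'n"
  assumes "q \<in> prob_simplex" "- (L *v q) \<in> F"
  shows "(norm (f + L *v q))\<^sup>2 / (2 * real CARD('n)) \<le> excess_surr (phi_quad L) F f q"
proof -
  have "bdd_below ((\<lambda>g. surr_risk (phi_quad L) g q) ` F)"
    using assms(1) unfolding prob_simplex_def surr_risk_def phi_quad_def
    by (intro bdd_belowI[of _ 0]) (auto intro!: sum_nonneg)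
  from risk_diff_le_excess_surr[OF assms(2) this]
  have "surr_risk (phi_quad L) f q - surr_risk (phi_quad L) (- (L *v q)) q
      \<le> excess_surr (phi_quad L) F f q" .
  moreover have "surr_risk (phi_quad L) f q - surr_risk (phi_quad L) (- (L *v q)) q
      = (norm (f + L *v q))\<^sup>2 / (2 * real CARD('n))"
    using assms(1) unfolding prob_simplex_def
    by (simp add: surr_risk_phi_quad add_divide_distrib diff_divide_distrib)
  ultimately show ?thesis by simp
qed

lemma excess_surr_phi_quad_nonneg:
  fixes L :: "real^'n^'n"
  assumes "subspace F" "span (columns L) \<subseteq> F" "q \<in> prob_simplex"
  shows "0 \<le> excess_surr (phi_quad L) F f q"
  using excess_surr_phi_quad_ge[OF assms(3) neg_expected_loss_in_subspace[OF assms(1,2)], of f]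
  by (rule order_trans[rotated]) simp

lemma excess_surr_phi_quad_lower_bound:
  fixes L :: "real^('n::{finite,linorder})^('n::{finite,linorder})"
  assumes F: "subspace F" and columns: "span (columns L) \<subseteq> F"
    and f: "f \<in> F" and q: "q \<in> prob_simplex"
    and eps: "0 \<le> \<epsilon>" "\<epsilon> \<le> excess_task L F f q"
    and B: "\<And>i j. i \<noteq> j \<Longrightarrow> (norm (orth_proj F (axis i 1 - axis j 1)))\<^sup>2 \<le> B" "0 \<le> B"
  shows "\<epsilon>\<^sup>2 \<le> 2 * real CARD('n) * excess_surr (phi_quad L) F f q * B"
proof -
  define v where "v = L *v q"
  define h where "h = f + v"
  define i where "i = pred f"
  define j where "j = pred (- v)"
  have "- v \<in> F"
    unfolding v_def using F columns by (rule neg_expected_loss_in_subspace)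
  then have "h \<in> F"
    unfolding h_def using F f by (metis diff_minus_eq_add subspace_diff)
  have "\<epsilon> \<le> v$i - v$j"
    using eps(2) excess_task_le_expected_loss_gap[of L q F f] \<open>- v \<in> F\<close>
    unfolding v_def i_def j_def by simp
  also have "\<dots> \<le> h$i - h$j"
    unfolding h_def i_def using pred_is_argmax[of f j] by simp
  finally have gap: "\<epsilon> \<le> h$i - h$j" .
  have "\<epsilon>\<^sup>2 \<le> B * (norm h)\<^sup>2"
  proof (cases "i = j")
    case True
    with gap eps(1) show ?thesis using B(2) by simp
  next
    case False
    have "\<epsilon> \<le> norm (orth_proj F (axis i 1 - axis j 1)) * norm h"
      using gap component_diff_le_norm_orth_proj[OF F \<open>h \<in> F\<close>] by (rule order_trans)
    from power_mono[OF this eps(1), of 2]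
    have "\<epsilon>\<^sup>2 \<le> (norm (orth_proj F (axis i 1 - axis j 1)))\<^sup>2 * (norm h)\<^sup>2"
      by (simp add: power_mult_distrib)
    also have "\<dots> \<le> B * (norm h)\<^sup>2"
      using B(1)[OF False] by (simp add: mult_right_mono)
    finally show ?thesis .
  qed
  also have "\<dots> \<le> B * (2 * real CARD('n) * excess_surr (phi_quad L) F f q)"
    using excess_surr_phi_quad_ge[OF q, of L F f] \<open>- v \<in> F\<close> B(2)
    unfolding v_def h_def by (intro mult_left_mono) (simp_all add: field_simps)
  finally show ?thesis by (simp add: mult_ac)
qed

text \<open>The degenerate case \<open>d = 0\<close> relies on \<open>inverse (ereal 0) = \<infinity>\<close> and
  \<open>0 * \<infinity> = 0\<close> in the extended reals.\<close>

lemma ereal_mult_inverse_le: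
  fixes a d e :: real
  assumes "0 \<le> a" "0 \<le> d" "0 \<le> e" "a \<le> d * e"
  shows "ereal a * inverse (ereal d) \<le> ereal e"
proof (cases "d = 0")
  case True
  with assms show ?thesis by simp
next
  case False
  with assms have "a / d \<le> e" by (simp add: divide_le_eq mult.commute)
  with False show ?thesis by (simp add: divide_inverse)
qed

lemma ereal_divide_le_mult_inverse:
  fixes a c d :: real
  assumes "0 \<le> a" "0 \<le> d" "d \<le> c" "0 < c"
  shows "ereal (a / c) \<le> ereal a * inverse (ereal d)"
proof (cases "d = 0")
  case True
  with assms show ?thesis by (cases "a = 0") auto
next
  case False
  with assms have "a / c \<le> a / d" by (intro divide_left_mono) auto
  with False show ?thesis by (simp add: divide_inverse)
qed

theorem theorem7:
  fixes L :: "real^('n::{finite,linorder})^('n::{finite,linorder})" and F :: "(real^('n::{finite,linorder})) set" and \<epsilon> :: real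
  assumes "CARD('n) \<ge> 2"
    and "\<forall>i j. 0 \<le> L$i$j"
    and "subspace F"
    and "span (columns L) \<subseteq> F"
    and "0 \<le> \<epsilon>"
  shows "calib (phi_quad L) L F \<epsilon> \<ge>
           ereal (\<epsilon>\<^sup>2) * inverse (ereal (2 * real CARD('n) *
              Max {(norm (orth_proj F (axis i 1 - axis j 1)))\<^sup>2 | i j. i \<noteq> j}))
       \<and> ereal (\<epsilon>\<^sup>2) * inverse (ereal (2 * real CARD('n) *
              Max {(norm (orth_proj F (axis i 1 - axis j 1)))\<^sup>2 | i j. i \<noteq> j}))
           \<ge> ereal (\<epsilon>\<^sup>2 / (4 * real CARD('n)))"
proof -
  define M where "M = Max {(norm (orth_proj F (axis i 1 - axis j 1)))\<^sup>2 | i j. i \<noteq> (j::'n)}"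
  define k where "k = real CARD('n)"
  note M_bounds = norm_orth_proj_axis_diff_Max_bounds[OF assms(3,1), folded M_def]
  have "ereal (\<epsilon>\<^sup>2) * inverse (ereal (2 * k * M)) \<le> calib (phi_quad L) L F \<epsilon>"
    unfolding calib_def
  proof (rule Inf_greatest, clarify)
    fix f q assume "f \<in> F" "q \<in> prob_simplex" "\<epsilon> \<le> excess_task L F f q"
    with assms(3-5) M_bounds(1,2) show
      "ereal (\<epsilon>\<^sup>2) * inverse (ereal (2 * k * M)) \<le> ereal (excess_surr (phi_quad L) F f q)"
      using excess_surr_phi_quad_lower_bound[of F L f q \<epsilon> M] excess_surr_phi_quad_nonneg[of F L q f]
      by (intro ereal_mult_inverse_le) (auto simp: k_def mult_ac)
  qed
  moreover have "ereal (\<epsilon>\<^sup>2 / (4 * k)) \<le> ereal (\<epsilon>\<^sup>2) * inverse (ereal (2 * k * M))"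
    using M_bounds(2,3) by (intro ereal_divide_le_mult_inverse) (auto simp: k_def)
  ultimately show ?thesis unfolding M_def k_def by simp
qed

end
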